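(* Let $G=(V,E)$ be a finite simple graph with at least one vertex, and let $G'$ be its connection graph. For a simplex $x$ and an integer $k\ge 1$, let $P(k,x)$ be the number of walks of length $k$ in $G'$ starting at $x$. Put $P(k)=\max_x P(k,x)$ and $r_k=1+P(k)^{1/k}$. Then, for every $k\ge 1$, the spectral radius $\rho$ of the Hodge Laplacian $H=(d+d^T)^2$ of $G$ satisfies $$\rho \le r_k-\frac{1}{r_k}.$$ Moreover, $r_k - 1/r_k$ converges, as $k\to\infty$, to the spectral radius of the sign-less Hodge Laplacian $|H|$.
   Context: Let $G=(V,E)$ be a finite simple graph. Its associated $1$-dimensional simplicial complex is the set of simplices $X=\{\{v\}: v\in V\}\cup E$, where each edge is regarded as a $2$-element subset of $V$; put $N=|V|+|E|$ and index $N\times N$ matrices by $X$. The connection graph $G'$ has vertex set $X$, and two distinct $x,y\in X$ are adjacent iff $x\cap y\neq\emptyset$. A walk of length $k$ from $x$ is a sequence $x=x_0,x_1,\dots,x_k$ of vertices of $G'$ in which consecutive entries are adjacent. For the Hodge Laplacian, fix an orientation of each edge; for an edge $x=\{a,b\}$ oriented from $a$ to $b$ set $d(x,\{a\})=-1$, $d(x,\{b\})=1$, and let all other entries of $d$ be $0$. The Hodge Laplacian is $H=(d+d^T)^2$; its spectrum does not depend on the chosen orientation. The sign-less exterior derivative $|d|$ has $|d|(x,y)=1$ if $y\subset x$ and $|x|=|y|+1$, and $0$ otherwise; the sign-less Hodge Laplacian is $|H|=(|d|+|d|^T)^2$. *)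

theory Defs
  imports "HOL-Analysis.Analysis"
begin

definition simple_graph :: "'a set \<Rightarrow> 'a set set \<Rightarrow> bool" where
  "simple_graph V E \<longleftrightarrow> finite V \<and> (\<forall>e\<in>E. e \<subseteq> V \<and> card e = 2)"

definition simplices :: "'a set \<Rightarrow> 'a set set \<Rightarrow> 'a set set" where
  "simplices V E = {{v} | v. v \<in> V} \<union> E"

definition conn_adj :: "'a set \<Rightarrow> 'a set \<Rightarrow> bool" where
  "conn_adj x y \<longleftrightarrow> x \<noteq> y \<and> x \<inter> y \<noteq> {}"

definition walks :: "'a set set \<Rightarrow> nat \<Rightarrow> 'a set \<Rightarrow> 'a set list set" where
  "walks X k x = {w. length w = Suc k \<and> w ! 0 = x \<and> set w \<subseteq> X \<and>
                     (\<forall>i<k. conn_adj (w ! i) (w ! Suc i))}"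

definition num_walks :: "'a set set \<Rightarrow> nat \<Rightarrow> 'a set \<Rightarrow> nat" where
  "num_walks X k x = card (walks X k x)"

definition max_walks :: "'a set set \<Rightarrow> nat \<Rightarrow> nat" where
  "max_walks X k = Max (num_walks X k ` X)"

definition r_seq :: "'a set set \<Rightarrow> nat \<Rightarrow> real" where
  "r_seq X k = 1 + root k (real (max_walks X k))"

definition mat_mult :: "'b set \<Rightarrow> ('b \<Rightarrow> 'b \<Rightarrow> real) \<Rightarrow> ('b \<Rightarrow> 'b \<Rightarrow> real) \<Rightarrow> 'b \<Rightarrow> 'b \<Rightarrow> real" where
  "mat_mult X A B = (\<lambda>x y. \<Sum>z\<in>X. A x z * B z y)"

definition mat_transpose :: "('b \<Rightarrow> 'b \<Rightarrow> real) \<Rightarrow> 'b \<Rightarrow> 'b \<Rightarrow> real" where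
  "mat_transpose A = (\<lambda>x y. A y x)"

definition mat_add :: "('b \<Rightarrow> 'b \<Rightarrow> real) \<Rightarrow> ('b \<Rightarrow> 'b \<Rightarrow> real) \<Rightarrow> 'b \<Rightarrow> 'b \<Rightarrow> real" where
  "mat_add A B = (\<lambda>x y. A x y + B x y)"

definition is_eigenvalue :: "'b set \<Rightarrow> ('b \<Rightarrow> 'b \<Rightarrow> real) \<Rightarrow> complex \<Rightarrow> bool" where
  "is_eigenvalue X A l \<longleftrightarrow> (\<exists>v :: 'b \<Rightarrow> complex. (\<exists>x\<in>X. v x \<noteq> 0) \<and>
      (\<forall>x\<in>X. (\<Sum>y\<in>X. complex_of_real (A x y) * v y) = l * v x))"

definition spectral_radius :: "'b set \<Rightarrow> ('b \<Rightarrow> 'b \<Rightarrow> real) \<Rightarrow> real" where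
  "spectral_radius X A = Max {cmod l | l. is_eigenvalue X A l}"

text \<open>Exterior derivative for an orientation given by head: edge x is oriented
  from its other endpoint to head x.  d(x,{a}) = -1, d(x,{head x}) = 1.\<close>
definition ext_d :: "('a set \<Rightarrow> 'a) \<Rightarrow> 'a set \<Rightarrow> 'a set \<Rightarrow> real" where
  "ext_d head x y = (if card x = 2 \<and> card y = 1 \<and> y \<subseteq> x
                     then (if y = {head x} then 1 else -1) else 0)"

definition abs_d :: "'a set \<Rightarrow> 'a set \<Rightarrow> real" where
  "abs_d x y = (if y \<subseteq> x \<and> card x = card y + 1 then 1 else 0)"

definition hodge :: "'a set set \<Rightarrow> ('a set \<Rightarrow> 'a) \<Rightarrow> 'a set \<Rightarrow> 'a set \<Rightarrow> real" where
  "hodge X head = (let D = mat_add (ext_d head) (mat_transpose (ext_d head)) in mat_mult X D D)"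

definition abs_hodge :: "'a set set \<Rightarrow> 'a set \<Rightarrow> 'a set \<Rightarrow> real" where
  "abs_hodge X = (let D = mat_add abs_d (mat_transpose abs_d) in mat_mult X D D)"

end

theory Submission
  imports Defs "Jordan_Normal_Form.Char_Poly"
begin

text \<open>The connection matrix \<open>L\<close>, with \<open>L x y = 1\<close> iff \<open>x \<inter> y \<noteq> {}\<close>, is \<open>1 + A\<close> for the
  adjacency matrix \<open>A\<close> of the connection graph, and satisfies the hydrogen identity
  \<open>L\<^sup>2 = 1 + \<bar>H\<bar> L\<close>, with \<open>L\<close> commuting with \<open>\<bar>H\<bar>\<close>. So an eigenvector of \<open>A\<close> for its top
  eigenvalue \<open>a\<close> is an eigenvector of \<open>\<bar>H\<bar>\<close> for \<open>c - 1/c\<close>, where \<open>c = 1 + a\<close>; conversely a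
  nonnegative top eigenvector of \<open>\<bar>H\<bar>\<close>, with eigenvalue \<open>\<mu>\<close>, produces an eigenvector of \<open>L\<close> for the
  root \<open>r\<close> of \<open>r\<^sup>2 = \<mu> r + 1\<close>, and \<open>r \<le> c\<close>. Hence \<open>\<bar>H\<bar>\<close> has spectral radius \<open>c - 1/c\<close>, which
  bounds that of \<open>H\<close> because \<open>\<bar>H\<bar>\<close> dominates \<open>H\<close> entrywise. Finally \<open>P(k, x)\<close> is the
  \<open>x\<close>-entry of \<open>A\<^sup>k 1\<close>, so \<open>a\<^sup>k \<le> P(k) \<le> a\<^sup>k \<surd>|X|\<close>: thus \<open>r\<^sub>k \<ge> c\<close>, \<open>r\<^sub>k \<longrightarrow> c\<close>, and
  \<open>t \<mapsto> t - 1/t\<close> is increasing.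

  All spectral facts are obtained variationally: the maximal Rayleigh quotient of a symmetric
  matrix is attained, by compactness, and is its largest eigenvalue.\<close>

section \<open>Symmetric matrices on a finite index set\<close>

definition mat_vec :: "'b set \<Rightarrow> ('b \<Rightarrow> 'b \<Rightarrow> real) \<Rightarrow> ('b \<Rightarrow> real) \<Rightarrow> 'b \<Rightarrow> real" where
  "mat_vec X M v = (\<lambda>x. \<Sum>y\<in>X. M x y * v y)"

definition inner_on :: "'b set \<Rightarrow> ('b \<Rightarrow> real) \<Rightarrow> ('b \<Rightarrow> real) \<Rightarrow> real" where
  "inner_on X u v = (\<Sum>x\<in>X. u x * v x)"

definition symmetric_on :: "'b set \<Rightarrow> ('b \<Rightarrow> 'b \<Rightarrow> real) \<Rightarrow> bool" where
  "symmetric_on X M \<longleftrightarrow> (\<forall>x\<in>X. \<forall>y\<in>X. M x y = M y x)"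

definition nonneg_on :: "'b set \<Rightarrow> ('b \<Rightarrow> 'b \<Rightarrow> real) \<Rightarrow> bool" where
  "nonneg_on X M \<longleftrightarrow> (\<forall>x\<in>X. \<forall>y\<in>X. M x y \<ge> 0)"

definition rayleigh_max :: "'b set \<Rightarrow> ('b \<Rightarrow> 'b \<Rightarrow> real) \<Rightarrow> real" where
  "rayleigh_max X M = Sup ((\<lambda>v. inner_on X v (mat_vec X M v)) ` {v. inner_on X v v = 1})"

lemma inner_on_commute: "inner_on X u v = inner_on X v u"
  by (simp add: inner_on_def mult.commute)

lemma inner_on_add_right: "inner_on X u (\<lambda>x. v x + w x) = inner_on X u v + inner_on X u w"
  by (simp add: inner_on_def distrib_left sum.distrib)

lemma inner_on_add_left: "inner_on X (\<lambda>x. v x + w x) u = inner_on X v u + inner_on X w u"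
  by (simp add: inner_on_def distrib_right sum.distrib)

lemma inner_on_scale_right: "inner_on X u (\<lambda>x. c * v x) = c * inner_on X u v"
  by (simp add: inner_on_def sum_distrib_left algebra_simps)

lemma inner_on_scale_left: "inner_on X (\<lambda>x. c * v x) u = c * inner_on X v u"
  by (simp add: inner_on_def sum_distrib_left algebra_simps)

lemma inner_on_cong:
  "(\<And>y. y \<in> X \<Longrightarrow> u y = u' y) \<Longrightarrow> (\<And>y. y \<in> X \<Longrightarrow> v y = v' y) \<Longrightarrow> inner_on X u v = inner_on X u' v'"
  by (simp add: inner_on_def)

lemma mat_vec_add: "mat_vec X M (\<lambda>x. v x + w x) = (\<lambda>x. mat_vec X M v x + mat_vec X M w x)"
  by (simp add: mat_vec_def distrib_left sum.distrib)

lemma mat_vec_scale: "mat_vec X M (\<lambda>x. c * v x) = (\<lambda>x. c * mat_vec X M v x)"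
  by (rule ext) (simp add: mat_vec_def sum_distrib_left algebra_simps)

lemma mat_vec_cong: "(\<And>y. y \<in> X \<Longrightarrow> v y = w y) \<Longrightarrow> mat_vec X M v x = mat_vec X M w x"
  by (simp add: mat_vec_def)

lemma mat_vec_mat_mult: "mat_vec X (mat_mult X A B) v x = mat_vec X A (mat_vec X B v) x"
proof -
  have "mat_vec X (mat_mult X A B) v x = (\<Sum>y\<in>X. \<Sum>z\<in>X. A x z * B z y * v y)"
    by (simp add: mat_vec_def mat_mult_def sum_distrib_right)
  also have "\<dots> = (\<Sum>z\<in>X. \<Sum>y\<in>X. A x z * B z y * v y)" by (rule sum.swap)
  also have "\<dots> = mat_vec X A (mat_vec X B v) x"
    by (simp add: mat_vec_def sum_distrib_left mult.assoc)
  finally show ?thesis .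
qed

lemma symmetric_on_mat_mult_self: "symmetric_on X D \<Longrightarrow> symmetric_on X (mat_mult X D D)"
  unfolding symmetric_on_def mat_mult_def by (auto intro!: sum.cong simp: mult.commute)

lemma quadratic_form_eq_double_sum:
  "inner_on X v (mat_vec X M v) = (\<Sum>x\<in>X. \<Sum>y\<in>X. v x * M x y * v y)"
  by (simp add: inner_on_def mat_vec_def sum_distrib_left mult.assoc)

lemma inner_on_mat_vec_symmetric:
  assumes "symmetric_on X M"
  shows "inner_on X u (mat_vec X M w) = inner_on X w (mat_vec X M u)"
proof -
  have "inner_on X u (mat_vec X M w) = (\<Sum>x\<in>X. \<Sum>y\<in>X. u x * M x y * w y)"
    by (simp add: inner_on_def mat_vec_def sum_distrib_left mult.assoc)
  also have "\<dots> = (\<Sum>y\<in>X. \<Sum>x\<in>X. u x * M x y * w y)" by (rule sum.swap)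
  also have "\<dots> = (\<Sum>y\<in>X. \<Sum>x\<in>X. w y * M y x * u x)"
    using assms by (intro sum.cong refl) (auto simp: symmetric_on_def)
  also have "\<dots> = inner_on X w (mat_vec X M u)"
    by (simp add: inner_on_def mat_vec_def sum_distrib_left mult.assoc)
  finally show ?thesis .
qed

lemma quadratic_form_add_scaled:
  assumes "symmetric_on X M"
  shows "inner_on X (\<lambda>x. u x + t * w x) (mat_vec X M (\<lambda>x. u x + t * w x)) =
     inner_on X u (mat_vec X M u) + 2 * t * inner_on X w (mat_vec X M u)
       + t\<^sup>2 * inner_on X w (mat_vec X M w)"
  using inner_on_mat_vec_symmetric[OF assms, of u w]
  by (simp add: mat_vec_add mat_vec_scale inner_on_add_left inner_on_add_right
      inner_on_scale_left inner_on_scale_right power2_eq_square algebra_simps)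

lemma inner_on_self_add_scaled:
  "inner_on X (\<lambda>x. u x + t * w x) (\<lambda>x. u x + t * w x) =
     inner_on X u u + 2 * t * inner_on X w u + t\<^sup>2 * inner_on X w w"
  using inner_on_commute[of X u w]
  by (simp add: inner_on_add_left inner_on_add_right inner_on_scale_left inner_on_scale_right
      power2_eq_square algebra_simps)

lemma inner_on_self_nonneg: "inner_on X v v \<ge> 0"
  by (simp add: inner_on_def sum_nonneg)

lemma inner_on_abs_self: "inner_on X (\<lambda>x. \<bar>v x\<bar>) (\<lambda>x. \<bar>v x\<bar>) = inner_on X v v"
  by (simp add: inner_on_def abs_mult_self_eq)

lemma inner_on_self_eq_0D:
  assumes "finite X" "inner_on X v v = 0" "x \<in> X"
  shows "v x = 0"
  using assms sum_nonneg_eq_0_iff[of X "\<lambda>x. v x * v x"] by (simp add: inner_on_def)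

lemma inner_on_self_pos:
  assumes "finite X" "x \<in> X" "v x \<noteq> 0"
  shows "inner_on X v v > 0"
  using inner_on_self_eq_0D[OF assms(1) _ assms(2), of v] assms(3) inner_on_self_nonneg[of X v]
  by fastforce

lemma ex_nonzero_if_inner_on_self_eq_1:
  assumes "inner_on X u u = 1"
  shows "\<exists>x\<in>X. u x \<noteq> 0"
proof (rule ccontr)
  assume "\<not> ?thesis"
  hence "inner_on X u u = 0" by (simp add: inner_on_def)
  thus False using assms by simp
qed

lemma abs_le_1_if_inner_on_self_eq_1:
  assumes "finite X" "inner_on X v v = 1" "x \<in> X"
  shows "\<bar>v x\<bar> \<le> 1"
proof -
  have "v x * v x \<le> inner_on X v v" unfolding inner_on_def
    by (rule member_le_sum) (use assms in auto)
  thus ?thesis using assms(2) abs_square_le_1[of "v x"] by (simp add: power2_eq_square)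
qed

lemma compactin_unit_sphere:
  fixes X :: "'b set"
  assumes "finite X"
  shows "compactin (product_topology (\<lambda>_. euclideanreal) X)
           {v \<in> PiE X (\<lambda>_. {-1..1}). inner_on X v v = 1}" (is "compactin ?T _")
proof -
  have proj: "continuous_map ?T euclideanreal (\<lambda>v. v k)" if "k \<in> X" for k
    using continuous_map_product_projection[of k X "\<lambda>_. euclideanreal"] that by simp
  have "continuous_map ?T euclideanreal (\<lambda>v. inner_on X v v)"
    unfolding inner_on_def by (intro continuous_map_sum continuous_map_real_mult proj assms) auto
  hence "closedin ?T {v \<in> topspace ?T. inner_on X v v \<in> {1}}"
    by (rule closedin_continuous_map_preimage) simp
  moreover have "compactin ?T (PiE X (\<lambda>_. {-1..1::real}))"
    by (simp add: compactin_PiE compactin_euclidean_iff)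
  ultimately have "compactin ?T (PiE X (\<lambda>_. {-1..1}) \<inter> {v \<in> topspace ?T. inner_on X v v \<in> {1}})"
    by (intro compact_Int_closedin)
  moreover have "PiE X (\<lambda>_. {-1..1}) \<inter> {v \<in> topspace ?T. inner_on X v v \<in> {1}} =
      {v \<in> PiE X (\<lambda>_. {-1..1}). inner_on X v v = 1}"
    by (auto simp: PiE_iff extensional_def)
  ultimately show ?thesis by simp
qed

lemma ex_rayleigh_maximizer:
  fixes X :: "'b set" and M :: "'b \<Rightarrow> 'b \<Rightarrow> real"
  assumes fin: "finite X" and ne: "X \<noteq> {}"
  shows "\<exists>u. inner_on X u u = 1 \<and>
           (\<forall>v. inner_on X v v = 1 \<longrightarrow> inner_on X v (mat_vec X M v) \<le> inner_on X u (mat_vec X M u))"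
proof -
  let ?T = "product_topology (\<lambda>_::'b. euclideanreal) X"
  define q where "q = (\<lambda>v. inner_on X v (mat_vec X M v))"
  define S where "S = {v \<in> PiE X (\<lambda>_. {-1..1}). inner_on X v v = 1}"
  have proj: "continuous_map ?T euclideanreal (\<lambda>v. v k)" if "k \<in> X" for k
    using continuous_map_product_projection[of k X "\<lambda>_. euclideanreal"] that by simp
  have cont: "continuous_map ?T euclideanreal q"
    unfolding q_def inner_on_def mat_vec_def
    by (intro continuous_map_sum continuous_map_real_mult continuous_map_real_mult_left proj fin) auto
  hence compact: "compact (q ` S)"
    using image_compactin[OF compactin_unit_sphere[OF fin] cont] by (simp add: S_def compactin_euclidean_iff)
  have restrict_in_S: "restrict v X \<in> S" if "inner_on X v v = 1" for v
    using abs_le_1_if_inner_on_self_eq_1[OF fin that] that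
    by (auto simp: S_def abs_le_iff inner_on_def)
  have q_restrict: "q (restrict v X) = q v" for v
    unfolding q_def by (intro inner_on_cong) (auto intro: mat_vec_cong)
  obtain x0 where "x0 \<in> X" using ne by blast
  hence "inner_on X (\<lambda>y. if y = x0 then 1 else 0) (\<lambda>y. if y = x0 then 1 else 0) = 1"
    using fin by (simp add: inner_on_def if_distrib cong: if_cong)
  hence "q ` S \<noteq> {}" using restrict_in_S by blast
  then obtain u where u: "u \<in> S" "\<forall>t\<in>q ` S. t \<le> q u"
    using compact_attains_sup[OF compact] by blast
  have "q v \<le> q u" if "inner_on X v v = 1" for v
    using u(2) restrict_in_S[OF that] q_restrict[of v] by (metis image_eqI)
  with u(1) show ?thesis unfolding q_def S_def by blast
qed

lemma rayleigh_max_eq_maximizer: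
  assumes "inner_on X u u = 1"
    and "\<forall>v. inner_on X v v = 1 \<longrightarrow> inner_on X v (mat_vec X M v) \<le> inner_on X u (mat_vec X M u)"
  shows "rayleigh_max X M = inner_on X u (mat_vec X M u)"
  unfolding rayleigh_max_def by (rule cSup_eq_maximum) (use assms in auto)

lemma rayleigh_max_attained:
  assumes "finite X" "X \<noteq> {}"
  shows "\<exists>u. inner_on X u u = 1 \<and> inner_on X u (mat_vec X M u) = rayleigh_max X M"
  using ex_rayleigh_maximizer[OF assms, of M] rayleigh_max_eq_maximizer by metis

lemma quadratic_form_le_rayleigh_max:
  assumes fin: "finite X" and ne: "X \<noteq> {}"
  shows "inner_on X v (mat_vec X M v) \<le> rayleigh_max X M * inner_on X v v"
proof (cases "inner_on X v v = 0")
  case True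
  thus ?thesis using inner_on_self_eq_0D[OF fin True] by (simp add: quadratic_form_eq_double_sum)
next
  case False
  hence pos: "inner_on X v v > 0" using inner_on_self_nonneg[of X v] by linarith
  define c where "c = sqrt (inner_on X v v)"
  have c: "c > 0" "c\<^sup>2 = inner_on X v v" using pos unfolding c_def by auto
  define w where "w = (\<lambda>x. (1/c) * v x)"
  have "inner_on X w w = (1/c)\<^sup>2 * inner_on X v v" unfolding w_def
    by (simp only: inner_on_scale_left inner_on_scale_right) (simp add: power2_eq_square)
  hence "inner_on X w w = 1" using c pos by (simp add: field_simps)
  moreover have "inner_on X w (mat_vec X M w) = (1/c)\<^sup>2 * inner_on X v (mat_vec X M v)" unfolding w_def
    by (simp only: mat_vec_scale inner_on_scale_left inner_on_scale_right) (simp add: power2_eq_square)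
  ultimately have "(1/c)\<^sup>2 * inner_on X v (mat_vec X M v) \<le> rayleigh_max X M"
    using ex_rayleigh_maximizer[OF fin ne, of M] rayleigh_max_eq_maximizer by metis
  thus ?thesis using c pos by (simp add: field_simps)
qed

text \<open>First-order optimality: if \<open>u\<close> maximizes the Rayleigh quotient, then for every \<open>t\<close> the
  quadratic \<open>2 t a + t\<^sup>2 c\<close> with \<open>a = \<bar>M u - l u\<bar>\<^sup>2\<close> is nonpositive, which forces \<open>a = 0\<close>.\<close>
lemma rayleigh_maximizer_is_eigenvector:
  assumes fin: "finite X" and sym: "symmetric_on X M"
    and le: "\<forall>v. inner_on X v (mat_vec X M v) \<le> l * inner_on X v v"
    and eq: "inner_on X u (mat_vec X M u) = l * inner_on X u u"
    and x: "x \<in> X"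
  shows "mat_vec X M u x = l * u x"
proof -
  define g where "g = (\<lambda>x. mat_vec X M u x + (-l) * u x)"
  define a where "a = inner_on X g g"
  define c where "c = inner_on X g (mat_vec X M g) - l * inner_on X g g"
  have "inner_on X g g = inner_on X g (\<lambda>x. mat_vec X M u x + (-l) * u x)"
    using g_def by (rule arg_cong)
  also have "\<dots> = inner_on X g (mat_vec X M u) + (-l) * inner_on X g u"
    by (simp only: inner_on_add_right inner_on_scale_right)
  finally have key: "inner_on X g (mat_vec X M u) - l * inner_on X g u = a" unfolding a_def by simp
  have ineq: "2 * t * a + t\<^sup>2 * c \<le> 0" for t
    using le[rule_format, of "\<lambda>x. u x + t * g x"] eq key
    unfolding quadratic_form_add_scaled[OF sym] inner_on_self_add_scaled c_def
    by (simp add: algebra_simps)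
  have "a = 0"
  proof (rule ccontr)
    assume "a \<noteq> 0"
    hence apos: "a > 0" using inner_on_self_nonneg[of X g] unfolding a_def by linarith
    define t where "t = a / (\<bar>c\<bar> + 1)"
    have tpos: "t > 0" unfolding t_def using apos by (simp add: add_pos_nonneg)
    have "t * \<bar>c\<bar> < a" unfolding t_def using apos by (simp add: field_simps add_pos_nonneg)
    moreover have "t * (-\<bar>c\<bar>) \<le> t * c" using tpos by (intro mult_left_mono) auto
    ultimately have "t * (2 * a + t * c) > 0" using apos tpos by simp
    thus False using ineq[of t] by (simp add: power2_eq_square algebra_simps)
  qed
  hence "g x = 0" using inner_on_self_eq_0D[OF fin _ x, of g] unfolding a_def by simp
  thus ?thesis unfolding g_def by simp
qed

lemma rayleigh_max_eigenvector:
  assumes "finite X" "X \<noteq> {}" "symmetric_on X M"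
  shows "\<exists>u. inner_on X u u = 1 \<and> (\<forall>x\<in>X. mat_vec X M u x = rayleigh_max X M * u x)"
  using rayleigh_max_attained[OF assms(1,2), of M] quadratic_form_le_rayleigh_max[OF assms(1,2)]
    rayleigh_maximizer_is_eigenvector[OF assms(1,3)] by (metis mult.right_neutral)

lemma abs_quadratic_form_le:
  assumes "nonneg_on X M"
  shows "\<bar>inner_on X v (mat_vec X M v)\<bar> \<le> inner_on X (\<lambda>x. \<bar>v x\<bar>) (mat_vec X M (\<lambda>x. \<bar>v x\<bar>))"
proof -
  have "\<bar>\<Sum>x\<in>X. \<Sum>y\<in>X. v x * M x y * v y\<bar> \<le> (\<Sum>x\<in>X. \<Sum>y\<in>X. \<bar>v x * M x y * v y\<bar>)"
    by (rule order_trans[OF sum_abs sum_mono[OF sum_abs]])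
  also have "\<dots> = (\<Sum>x\<in>X. \<Sum>y\<in>X. \<bar>v x\<bar> * M x y * \<bar>v y\<bar>)"
    using assms by (intro sum.cong refl) (auto simp: nonneg_on_def abs_mult)
  finally show ?thesis by (simp add: quadratic_form_eq_double_sum)
qed

lemma abs_quadratic_form_le_rayleigh_max:
  assumes "finite X" "X \<noteq> {}" "nonneg_on X M"
  shows "\<bar>inner_on X v (mat_vec X M v)\<bar> \<le> rayleigh_max X M * inner_on X v v"
  using abs_quadratic_form_le[OF assms(3), of v]
    quadratic_form_le_rayleigh_max[OF assms(1,2), where M = M and v = "\<lambda>x. \<bar>v x\<bar>"]
  by (simp add: inner_on_abs_self)

lemma rayleigh_max_nonneg:
  assumes "finite X" "X \<noteq> {}" "nonneg_on X M"
  shows "rayleigh_max X M \<ge> 0"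
  using rayleigh_max_attained[OF assms(1,2), of M] abs_quadratic_form_le_rayleigh_max[OF assms]
  by (metis abs_ge_zero mult.right_neutral order_trans)

text \<open>Replacing a maximizer by its absolute value does not decrease the Rayleigh quotient, so the
  top eigenvalue of a nonnegative symmetric matrix has a nonnegative eigenvector.\<close>
lemma nonneg_rayleigh_max_eigenvector:
  assumes fin: "finite X" and ne: "X \<noteq> {}" and sym: "symmetric_on X M" and nonneg: "nonneg_on X M"
  shows "\<exists>u. inner_on X u u = 1 \<and> (\<forall>x. u x \<ge> 0) \<and> (\<forall>x\<in>X. mat_vec X M u x = rayleigh_max X M * u x)"
proof -
  obtain u where u: "inner_on X u u = 1" "inner_on X u (mat_vec X M u) = rayleigh_max X M"
    using rayleigh_max_attained[OF fin ne] by blast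
  define u' where "u' = (\<lambda>x. \<bar>u x\<bar>)"
  have norm: "inner_on X u' u' = 1" using u(1) unfolding u'_def by (simp add: inner_on_abs_self)
  have "inner_on X u' (mat_vec X M u') \<ge> rayleigh_max X M"
    using abs_quadratic_form_le[OF nonneg, of u] u(2) unfolding u'_def by simp
  moreover have "inner_on X u' (mat_vec X M u') \<le> rayleigh_max X M"
    using quadratic_form_le_rayleigh_max[OF fin ne, where M = M and v = u'] norm by simp
  ultimately have "inner_on X u' (mat_vec X M u') = rayleigh_max X M * inner_on X u' u'"
    using norm by simp
  with norm show ?thesis
    using rayleigh_maximizer_is_eigenvector[OF fin sym] quadratic_form_le_rayleigh_max[OF fin ne]
    unfolding u'_def by fastforce
qed

text \<open>The quadratic-form bound \<open>\<bar>\<langle>v, M v\<rangle>\<bar> \<le> a \<bar>v\<bar>\<^sup>2\<close> is applied to \<open>g \<pm> c M g\<close> and the two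
  inequalities are added; the choice \<open>c = 1/a\<close> gives the operator-norm bound.\<close>
lemma inner_on_mat_vec_self_le:
  assumes sym: "symmetric_on X M" and a: "a \<ge> 0"
    and bound: "\<forall>v. \<bar>inner_on X v (mat_vec X M v)\<bar> \<le> a * inner_on X v v"
  shows "inner_on X (mat_vec X M g) (mat_vec X M g) \<le> a\<^sup>2 * inner_on X g g"
proof -
  define h where "h = mat_vec X M g"
  define n where "n = inner_on X h h"
  have main: "4 * c * n \<le> a * (2 * inner_on X g g + 2 * c\<^sup>2 * n)" for c
  proof -
    have p: "inner_on X (\<lambda>x. g x + c * h x) (mat_vec X M (\<lambda>x. g x + c * h x))
               \<le> a * inner_on X (\<lambda>x. g x + c * h x) (\<lambda>x. g x + c * h x)"
      using bound by (metis abs_le_D1)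
    have m: "- inner_on X (\<lambda>x. g x + (-c) * h x) (mat_vec X M (\<lambda>x. g x + (-c) * h x))
               \<le> a * inner_on X (\<lambda>x. g x + (-c) * h x) (\<lambda>x. g x + (-c) * h x)"
      using bound by (metis abs_le_D2)
    have "inner_on X h (mat_vec X M g) = n" unfolding n_def h_def ..
    with p m show ?thesis
      unfolding quadratic_form_add_scaled[OF sym] inner_on_self_add_scaled n_def
      by (simp add: algebra_simps)
  qed
  show ?thesis
  proof (cases "a = 0")
    case True
    thus ?thesis using main[of 1] inner_on_self_nonneg[of X h] unfolding n_def h_def by simp
  next
    case False
    hence ap: "a > 0" using a by simp
    have "4 * n \<le> a * (a * (2 * inner_on X g g + 2 * (1/a)\<^sup>2 * n))"
      using main[of "1/a"] ap by (simp add: field_simps)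
    also have "\<dots> = 2 * a\<^sup>2 * inner_on X g g + 2 * n" using ap by (simp add: field_simps power2_eq_square)
    finally show ?thesis unfolding n_def h_def by simp
  qed
qed

section \<open>Eigenvalues and spectral radius\<close>

lemma eigenvalue_mat_if_is_eigenvalue:
  assumes f: "bij_betw f {0..<n} X" and ev: "is_eigenvalue X A l"
  shows "eigenvalue (mat n n (\<lambda>(i, j). complex_of_real (A (f i) (f j)))) l"
proof -
  define B where "B = mat n n (\<lambda>(i, j). complex_of_real (A (f i) (f j)))"
  have "\<exists>v. (\<exists>x\<in>X. v x \<noteq> 0) \<and> (\<forall>x\<in>X. (\<Sum>y\<in>X. complex_of_real (A x y) * v y) = l * v x)"
    using ev unfolding is_eigenvalue_def by assumption
  then obtain v where v: "\<exists>x\<in>X. v x \<noteq> 0" "\<forall>x\<in>X. (\<Sum>y\<in>X. complex_of_real (A x y) * v y) = l * v x"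
    by blast
  define w where "w = vec n (\<lambda>i. v (f i))"
  have "eigenvector B w l" unfolding eigenvector_def
  proof (intro conjI)
    show "w \<in> carrier_vec (dim_row B)" by (simp add: w_def B_def)
    obtain x where x: "x \<in> X" "v x \<noteq> 0" using v by blast
    have "x \<in> f ` {0..<n}" using f x(1) unfolding bij_betw_def by simp
    then obtain i where i: "i < n" "f i = x" by auto
    show "w \<noteq> 0\<^sub>v (dim_row B)"
    proof
      assume "w = 0\<^sub>v (dim_row B)"
      hence "w $ i = 0" using i by (simp add: B_def)
      thus False using i x by (simp add: w_def)
    qed
    show "B *\<^sub>v w = l \<cdot>\<^sub>v w"
    proof (rule eq_vecI)
      fix i assume "i < dim_vec (l \<cdot>\<^sub>v w)"
      hence i: "i < n" by (simp add: w_def)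
      have "(B *\<^sub>v w) $ i = (\<Sum>j\<in>{0..<n}. complex_of_real (A (f i) (f j)) * v (f j))"
        using i by (simp add: B_def w_def scalar_prod_def)
      also have "\<dots> = (\<Sum>y\<in>X. complex_of_real (A (f i) y) * v y)"
        by (rule sum.reindex_bij_betw[OF f])
      also have "\<dots> = l * v (f i)" using v(2) bij_betwE[OF f] i by simp
      finally show "(B *\<^sub>v w) $ i = (l \<cdot>\<^sub>v w) $ i" using i by (simp add: w_def)
    qed (simp add: B_def w_def)
  qed
  thus ?thesis unfolding eigenvalue_def B_def by blast
qed

lemma finite_eigenvalues:
  assumes fin: "finite X"
  shows "finite {l. is_eigenvalue X A l}"
proof -
  define n where "n = card X"
  obtain f where f: "bij_betw f {0..<n} X"
    using ex_bij_betw_nat_finite[OF fin] unfolding n_def by blast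
  define B where "B = mat n n (\<lambda>(i, j). complex_of_real (A (f i) (f j)))"
  have B: "B \<in> carrier_mat n n" by (simp add: B_def)
  have "{l. is_eigenvalue X A l} \<subseteq> {l. poly (char_poly B) l = 0}"
    using eigenvalue_mat_if_is_eigenvalue[OF f] eigenvalue_root_char_poly[OF B] unfolding B_def by blast
  moreover have "char_poly B \<noteq> 0" using degree_monic_char_poly[OF B] by auto
  hence "finite {l. poly (char_poly B) l = 0}" by (rule poly_roots_finite)
  ultimately show ?thesis by (rule finite_subset)
qed

lemma finite_eigenvalue_norms: "finite X \<Longrightarrow> finite {cmod l |l. is_eigenvalue X A l}"
proof -
  have "{cmod l |l. is_eigenvalue X A l} = cmod ` {l. is_eigenvalue X A l}" by auto
  thus "finite X \<Longrightarrow> ?thesis" using finite_eigenvalues[of X A] by simp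
qed

lemma is_eigenvalue_of_real:
  assumes "\<forall>x\<in>X. mat_vec X M u x = l * u x" "x0 \<in> X" "u x0 \<noteq> 0"
  shows "is_eigenvalue X M (complex_of_real l)"
  unfolding is_eigenvalue_def
proof (intro exI[of _ "\<lambda>x. complex_of_real (u x)"] conjI ballI)
  show "\<exists>x\<in>X. complex_of_real (u x) \<noteq> 0" using assms by auto
  fix x assume "x \<in> X"
  have "(\<Sum>y\<in>X. complex_of_real (M x y) * complex_of_real (u y)) = complex_of_real (mat_vec X M u x)"
    by (simp add: mat_vec_def)
  thus "(\<Sum>y\<in>X. complex_of_real (M x y) * complex_of_real (u y)) = complex_of_real l * complex_of_real (u x)"
    using assms(1) \<open>x \<in> X\<close> by simp
qed

text \<open>The moduli of an eigenvector of \<open>M\<close> form a subsolution \<open>\<bar>l\<bar> \<bar>v\<bar> \<le> N \<bar>v\<bar>\<close> for a matrix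
  \<open>N\<close> dominating \<open>M\<close> entrywise.\<close>
lemma eigenvalue_norm_le_if_dominated:
  assumes fin: "finite X" and dom: "\<forall>x\<in>X. \<forall>y\<in>X. \<bar>M x y\<bar> \<le> N x y"
    and bound: "\<forall>v. inner_on X v (mat_vec X N v) \<le> a * inner_on X v v"
    and ev: "is_eigenvalue X M l"
  shows "cmod l \<le> a"
proof -
  obtain v where v: "\<exists>x\<in>X. v x \<noteq> 0" "\<forall>x\<in>X. (\<Sum>y\<in>X. complex_of_real (M x y) * v y) = l * v x"
    using ev unfolding is_eigenvalue_def by blast
  define u where "u = (\<lambda>x. cmod (v x))"
  have sub: "cmod l * u x \<le> mat_vec X N u x" if x: "x \<in> X" for x
  proof -
    have "cmod l * u x = cmod (\<Sum>y\<in>X. complex_of_real (M x y) * v y)"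
      using v(2) x by (simp add: u_def norm_mult)
    also have "\<dots> \<le> (\<Sum>y\<in>X. cmod (complex_of_real (M x y) * v y))" by (rule norm_sum)
    also have "\<dots> = (\<Sum>y\<in>X. \<bar>M x y\<bar> * u y)" by (simp add: norm_mult u_def)
    also have "\<dots> \<le> (\<Sum>y\<in>X. N x y * u y)"
      using dom x by (intro sum_mono mult_right_mono) (auto simp: u_def)
    finally show ?thesis by (simp add: mat_vec_def)
  qed
  have "cmod l * inner_on X u u = inner_on X u (\<lambda>x. cmod l * u x)" by (simp add: inner_on_scale_right)
  also have "\<dots> \<le> inner_on X u (mat_vec X N u)" unfolding inner_on_def
    using sub by (intro sum_mono mult_left_mono) (auto simp: u_def)
  also have "\<dots> \<le> a * inner_on X u u" using bound by blast
  finally have "cmod l * inner_on X u u \<le> a * inner_on X u u" .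
  moreover obtain x where "x \<in> X" "u x \<noteq> 0" using v(1) by (auto simp: u_def)
  hence "inner_on X u u > 0" using inner_on_self_pos[OF fin] by blast
  ultimately show ?thesis by simp
qed

lemma spectral_radius_le_rayleigh_max_if_dominated:
  assumes fin: "finite X" and ne: "X \<noteq> {}" and sym: "symmetric_on X M"
    and dom: "\<forall>x\<in>X. \<forall>y\<in>X. \<bar>M x y\<bar> \<le> N x y"
  shows "spectral_radius X M \<le> rayleigh_max X N"
proof -
  obtain u where u: "inner_on X u u = 1" "\<forall>x\<in>X. mat_vec X M u x = rayleigh_max X M * u x"
    using rayleigh_max_eigenvector[OF fin ne sym] by blast
  obtain x0 where "x0 \<in> X" "u x0 \<noteq> 0" using ex_nonzero_if_inner_on_self_eq_1[OF u(1)] by blast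
  hence "is_eigenvalue X M (complex_of_real (rayleigh_max X M))" using is_eigenvalue_of_real[OF u(2)] by blast
  hence "{cmod l |l. is_eigenvalue X M l} \<noteq> {}" by blast
  moreover have "cmod l \<le> rayleigh_max X N" if "is_eigenvalue X M l" for l
    using eigenvalue_norm_le_if_dominated[OF fin dom _ that] quadratic_form_le_rayleigh_max[OF fin ne]
    by blast
  ultimately show ?thesis unfolding spectral_radius_def
    using finite_eigenvalue_norms[OF fin, of M] by (auto simp: Max_le_iff)
qed

lemma spectral_radius_eq_rayleigh_max:
  assumes fin: "finite X" and ne: "X \<noteq> {}" and sym: "symmetric_on X N" and nonneg: "nonneg_on X N"
  shows "spectral_radius X N = rayleigh_max X N"
proof -
  obtain u where u: "inner_on X u u = 1" "\<forall>x\<in>X. mat_vec X N u x = rayleigh_max X N * u x"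
    using rayleigh_max_eigenvector[OF fin ne sym] by blast
  obtain x0 where "x0 \<in> X" "u x0 \<noteq> 0" using ex_nonzero_if_inner_on_self_eq_1[OF u(1)] by blast
  hence "is_eigenvalue X N (complex_of_real (rayleigh_max X N))" using is_eigenvalue_of_real[OF u(2)] by blast
  moreover have "rayleigh_max X N \<ge> 0" using rayleigh_max_nonneg[OF fin ne nonneg] .
  moreover have "cmod l \<le> rayleigh_max X N" if "is_eigenvalue X N l" for l
  proof (rule eigenvalue_norm_le_if_dominated[OF fin _ _ that])
    show "\<forall>x\<in>X. \<forall>y\<in>X. \<bar>N x y\<bar> \<le> N x y" using nonneg by (auto simp: nonneg_on_def)
  qed (use quadratic_form_le_rayleigh_max[OF fin ne] in blast)
  ultimately show ?thesis unfolding spectral_radius_def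
    by (intro Max_eqI finite_eigenvalue_norms fin)
      (blast, auto intro!: exI[of _ "complex_of_real (rayleigh_max X N)"])
qed

section \<open>Walks in the connection graph\<close>

definition conn_adj_mat :: "'a set \<Rightarrow> 'a set \<Rightarrow> real" where
  "conn_adj_mat x y = (if conn_adj x y then 1 else 0)"

lemma symmetric_on_conn_adj_mat: "symmetric_on X conn_adj_mat"
  unfolding symmetric_on_def conn_adj_mat_def conn_adj_def by auto

lemma nonneg_on_conn_adj_mat: "nonneg_on X conn_adj_mat"
  unfolding nonneg_on_def conn_adj_mat_def by auto

lemma walks_0: "x \<in> X \<Longrightarrow> walks X 0 x = {[x]}"
  unfolding walks_def by (auto simp: length_Suc_conv)

lemma walks_Suc:
  assumes x: "x \<in> X"
  shows "walks X (Suc k) x = (\<Union>y\<in>{y\<in>X. conn_adj x y}. (\<lambda>w. x # w) ` walks X k y)"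
proof
  show "walks X (Suc k) x \<subseteq> (\<Union>y\<in>{y\<in>X. conn_adj x y}. (\<lambda>w. x # w) ` walks X k y)"
  proof
    fix w assume w: "w \<in> walks X (Suc k) x"
    then obtain w' where w': "w = x # w'" "length w' = Suc k"
      unfolding walks_def by (cases w) auto
    have adj: "\<forall>i<Suc k. conn_adj (w ! i) (w ! Suc i)" and set: "set w' \<subseteq> X"
      using w w' unfolding walks_def by auto
    have "w' ! 0 \<in> X" using set w'(2) by (metis nth_mem subsetD zero_less_Suc)
    moreover have "conn_adj x (w' ! 0)" using adj[rule_format, of 0] w' by simp
    moreover have "w' \<in> walks X k (w' ! 0)"
      using adj w' set unfolding walks_def by auto
    ultimately show "w \<in> (\<Union>y\<in>{y\<in>X. conn_adj x y}. (\<lambda>w. x # w) ` walks X k y)"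
      using w' by blast
  qed
  show "(\<Union>y\<in>{y\<in>X. conn_adj x y}. (\<lambda>w. x # w) ` walks X k y) \<subseteq> walks X (Suc k) x"
  proof
    fix w assume "w \<in> (\<Union>y\<in>{y\<in>X. conn_adj x y}. (\<lambda>w. x # w) ` walks X k y)"
    then obtain y w' where y: "conn_adj x y" and w': "w' \<in> walks X k y" and w: "w = x # w'"
      by blast
    have "conn_adj (w ! i) (w ! Suc i)" if "i < Suc k" for i
      using y w' that unfolding w walks_def by (cases i) auto
    thus "w \<in> walks X (Suc k) x" using w w' x unfolding walks_def by auto
  qed
qed

lemma finite_walks: "finite X \<Longrightarrow> finite (walks X k x)"
  by (rule finite_subset[OF _ finite_lists_length_eq]) (auto simp: walks_def)

lemma num_walks_0: "x \<in> X \<Longrightarrow> num_walks X 0 x = 1"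
  by (simp add: num_walks_def walks_0)

lemma num_walks_Suc:
  assumes fin: "finite X" and x: "x \<in> X"
  shows "real (num_walks X (Suc k) x) = mat_vec X conn_adj_mat (\<lambda>y. real (num_walks X k y)) x"
proof -
  let ?I = "{y\<in>X. conn_adj x y}"
  have "num_walks X (Suc k) x = card (\<Union>y\<in>?I. (\<lambda>w. x # w) ` walks X k y)"
    unfolding num_walks_def walks_Suc[OF x] ..
  also have "\<dots> = (\<Sum>y\<in>?I. card ((\<lambda>w. x # w) ` walks X k y))"
    using fin finite_walks[OF fin] by (intro card_UN_disjoint) (auto simp: walks_def)
  also have "\<dots> = (\<Sum>y\<in>?I. num_walks X k y)"
    unfolding num_walks_def by (intro sum.cong refl card_image) (simp add: inj_on_def)
  finally have "real (num_walks X (Suc k) x) = (\<Sum>y\<in>?I. real (num_walks X k y))" by simp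
  also have "\<dots> = (\<Sum>y\<in>X. if conn_adj x y then real (num_walks X k y) else 0)"
    using fin by (simp add: sum.inter_filter)
  also have "\<dots> = mat_vec X conn_adj_mat (\<lambda>y. real (num_walks X k y)) x"
    unfolding mat_vec_def conn_adj_mat_def by (intro sum.cong) auto
  finally show ?thesis .
qed

text \<open>If \<open>u \<ge> 0\<close> is a Perron vector with eigenvalue \<open>a\<close> and maximal entry \<open>m\<close>, then
  \<open>a\<^sup>k u \<le> m \<cdot> num_walks k\<close> entrywise, by induction on \<open>k\<close>.\<close>
lemma rayleigh_max_power_le_max_walks:
  assumes fin: "finite X" and ne: "X \<noteq> {}"
  shows "rayleigh_max X conn_adj_mat ^ k \<le> real (max_walks X k)"
proof -
  define a where "a = rayleigh_max X conn_adj_mat"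
  obtain u where u: "inner_on X u u = 1" "\<forall>x. u x \<ge> 0" "\<forall>x\<in>X. mat_vec X conn_adj_mat u x = a * u x"
    using nonneg_rayleigh_max_eigenvector[OF fin ne symmetric_on_conn_adj_mat nonneg_on_conn_adj_mat]
    unfolding a_def by blast
  define m where "m = Max (u ` X)"
  have "m \<in> u ` X" unfolding m_def using fin ne by (intro Max_in) auto
  then obtain x0 where x0: "x0 \<in> X" "u x0 = m" by auto
  have le_m: "u x \<le> m" if "x \<in> X" for x unfolding m_def using fin that by simp
  obtain x1 where "x1 \<in> X" "u x1 \<noteq> 0" using ex_nonzero_if_inner_on_self_eq_1[OF u(1)] by blast
  hence m: "m > 0" using le_m[of x1] u(2)[rule_format, of x1] by linarith
  have mono: "mat_vec X conn_adj_mat g x \<le> mat_vec X conn_adj_mat g' x" if "\<forall>y\<in>X. g y \<le> g' y" for g g' x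
    unfolding mat_vec_def using that by (intro sum_mono mult_left_mono) (auto simp: conn_adj_mat_def)
  have "\<forall>x\<in>X. a ^ k * u x \<le> m * real (num_walks X k x)"
  proof (induction k)
    case 0
    thus ?case using le_m by (simp add: num_walks_0)
  next
    case (Suc k)
    show ?case
    proof
      fix x assume x: "x \<in> X"
      have "a ^ Suc k * u x = mat_vec X conn_adj_mat (\<lambda>y. a ^ k * u y) x"
        using u(3) x by (simp add: mat_vec_scale)
      also have "\<dots> \<le> mat_vec X conn_adj_mat (\<lambda>y. m * real (num_walks X k y)) x"
        using Suc.IH by (intro mono) auto
      also have "\<dots> = m * real (num_walks X (Suc k) x)"
        using num_walks_Suc[OF fin x] by (simp add: mat_vec_scale)
      finally show "a ^ Suc k * u x \<le> m * real (num_walks X (Suc k) x)" .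
    qed
  qed
  hence "m * a ^ k \<le> m * real (num_walks X k x0)" using x0 by (metis mult.commute)
  hence "a ^ k \<le> real (num_walks X k x0)" using m by simp
  also have "\<dots> \<le> real (max_walks X k)" unfolding max_walks_def using fin x0(1) by simp
  finally show ?thesis unfolding a_def .
qed

lemma max_walks_le_rayleigh_max_power:
  assumes fin: "finite X" and ne: "X \<noteq> {}"
  shows "real (max_walks X k) \<le> rayleigh_max X conn_adj_mat ^ k * sqrt (real (card X))"
proof -
  define a where "a = rayleigh_max X conn_adj_mat"
  define f where "f = (\<lambda>k y. real (num_walks X k y))"
  have a: "a \<ge> 0" using rayleigh_max_nonneg[OF fin ne nonneg_on_conn_adj_mat] unfolding a_def .
  have bound: "\<forall>v. \<bar>inner_on X v (mat_vec X conn_adj_mat v)\<bar> \<le> a * inner_on X v v"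
    using abs_quadratic_form_le_rayleigh_max[OF fin ne nonneg_on_conn_adj_mat] unfolding a_def by blast
  have norm_f: "inner_on X (f k) (f k) \<le> a ^ (2 * k) * real (card X)" for k
  proof (induction k)
    case 0
    thus ?case by (simp add: inner_on_def f_def num_walks_0)
  next
    case (Suc k)
    have "inner_on X (f (Suc k)) (f (Suc k))
          = inner_on X (mat_vec X conn_adj_mat (f k)) (mat_vec X conn_adj_mat (f k))"
      unfolding f_def using num_walks_Suc[OF fin] by (intro inner_on_cong) auto
    also have "\<dots> \<le> a\<^sup>2 * inner_on X (f k) (f k)"
      by (rule inner_on_mat_vec_self_le[OF symmetric_on_conn_adj_mat a bound])
    also have "\<dots> \<le> a\<^sup>2 * (a ^ (2 * k) * real (card X))" using Suc a by (intro mult_left_mono) auto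
    finally show ?case by (simp add: power_add power_mult power2_eq_square mult.assoc)
  qed
  have "max_walks X k \<in> num_walks X k ` X" unfolding max_walks_def using fin ne by (intro Max_in) auto
  then obtain x1 where x1: "x1 \<in> X" "max_walks X k = num_walks X k x1" by auto
  have "(real (max_walks X k))\<^sup>2 = f k x1 * f k x1"
    unfolding f_def using x1 by (simp add: power2_eq_square)
  also have "\<dots> \<le> inner_on X (f k) (f k)"
    unfolding inner_on_def using fin x1(1) by (intro member_le_sum) auto
  also have "\<dots> \<le> (a ^ k * sqrt (real (card X)))\<^sup>2"
    using norm_f[of k] by (simp add: power_mult_distrib power_mult mult.commute)
  finally show ?thesis
    using a unfolding a_def by (metis abs_le_square_iff abs_of_nonneg of_nat_0_le_iff real_sqrt_ge_zero
      mult_nonneg_nonneg zero_le_power)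
qed

lemma rayleigh_max_le_root_max_walks:
  assumes "finite X" "X \<noteq> {}" "k \<ge> 1"
  shows "rayleigh_max X conn_adj_mat \<le> root k (real (max_walks X k))"
proof -
  have "root k (rayleigh_max X conn_adj_mat ^ k) \<le> root k (real (max_walks X k))"
    using rayleigh_max_power_le_max_walks[OF assms(1,2)] assms(3) by (intro real_root_le_mono) auto
  thus ?thesis
    using real_root_power_cancel[of k] rayleigh_max_nonneg[OF assms(1,2) nonneg_on_conn_adj_mat] assms(3)
    by simp
qed

lemma root_max_walks_tendsto:
  assumes fin: "finite X" and ne: "X \<noteq> {}"
  shows "(\<lambda>k. root k (real (max_walks X k))) \<longlonglongrightarrow> rayleigh_max X conn_adj_mat"
proof (rule tendsto_sandwich)
  let ?a = "rayleigh_max X conn_adj_mat" and ?N = "sqrt (real (card X))"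
  have a: "?a \<ge> 0" using rayleigh_max_nonneg[OF fin ne nonneg_on_conn_adj_mat] .
  show "\<forall>\<^sub>F k in sequentially. ?a \<le> root k (real (max_walks X k))"
    using rayleigh_max_le_root_max_walks[OF fin ne] by (auto simp: eventually_sequentially)
  have "root k (real (max_walks X k)) \<le> ?a * root k ?N" if k: "k \<ge> 1" for k
  proof -
    have "root k (real (max_walks X k)) \<le> root k (?a ^ k * ?N)"
      using max_walks_le_rayleigh_max_power[OF fin ne] k by (intro real_root_le_mono) auto
    also have "\<dots> = ?a * root k ?N" using real_root_power_cancel[of k ?a] k a by (simp add: real_root_mult)
    finally show ?thesis .
  qed
  thus "\<forall>\<^sub>F k in sequentially. root k (real (max_walks X k)) \<le> ?a * root k ?N"
    by (auto simp: eventually_sequentially)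
  have "?N > 0" using fin ne by (simp add: card_gt_0_iff)
  hence "(\<lambda>k. ?a * root k ?N) \<longlonglongrightarrow> ?a * 1" by (intro tendsto_mult_left LIMSEQ_root_const)
  thus "(\<lambda>k. ?a * root k ?N) \<longlonglongrightarrow> ?a" by simp
qed simp

section \<open>The connection matrix and the sign-less Hodge Laplacian\<close>

definition conn_mat :: "'a set \<Rightarrow> 'a set \<Rightarrow> real" where
  "conn_mat x y = (if x \<inter> y \<noteq> {} then 1 else 0)"

definition abs_dirac :: "'a set \<Rightarrow> 'a set \<Rightarrow> real" where
  "abs_dirac = mat_add abs_d (mat_transpose abs_d)"

definition dirac :: "('a set \<Rightarrow> 'a) \<Rightarrow> 'a set \<Rightarrow> 'a set \<Rightarrow> real" where
  "dirac head = mat_add (ext_d head) (mat_transpose (ext_d head))"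

definition incident_sum :: "'a set set \<Rightarrow> ('a set \<Rightarrow> real) \<Rightarrow> 'a \<Rightarrow> real" where
  "incident_sum E u a = (\<Sum>e\<in>E. if a \<in> e then u e else 0)"

definition endpoint_sum :: "('a set \<Rightarrow> real) \<Rightarrow> 'a set \<Rightarrow> real" where
  "endpoint_sum u e = (\<Sum>b\<in>e. u {b})"

lemma abs_dirac_nonneg: "abs_dirac x y \<ge> 0"
  unfolding abs_dirac_def mat_add_def mat_transpose_def abs_d_def by auto

lemma abs_dirac_dominates_dirac: "\<bar>dirac head x y\<bar> \<le> abs_dirac x y"
  unfolding dirac_def abs_dirac_def mat_add_def mat_transpose_def ext_d_def abs_d_def by auto

lemma symmetric_on_abs_hodge: "symmetric_on X (abs_hodge X)"
  unfolding abs_hodge_def Let_def abs_dirac_def[symmetric]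
  by (rule symmetric_on_mat_mult_self) (auto simp: symmetric_on_def abs_dirac_def mat_add_def mat_transpose_def)

lemma nonneg_on_abs_hodge: "nonneg_on X (abs_hodge X)"
  unfolding nonneg_on_def abs_hodge_def Let_def abs_dirac_def[symmetric] mat_mult_def
  by (auto intro!: sum_nonneg simp: abs_dirac_nonneg)

lemma symmetric_on_hodge: "symmetric_on X (hodge X head)"
  unfolding hodge_def Let_def dirac_def[symmetric]
  by (rule symmetric_on_mat_mult_self) (auto simp: symmetric_on_def dirac_def mat_add_def mat_transpose_def)

lemma abs_hodge_dominates_hodge: "\<bar>hodge X head x y\<bar> \<le> abs_hodge X x y"
proof -
  have "\<bar>\<Sum>z\<in>X. dirac head x z * dirac head z y\<bar> \<le> (\<Sum>z\<in>X. \<bar>dirac head x z * dirac head z y\<bar>)"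
    by (rule sum_abs)
  also have "\<dots> \<le> (\<Sum>z\<in>X. abs_dirac x z * abs_dirac z y)"
    by (intro sum_mono) (auto simp: abs_mult intro!: mult_mono abs_dirac_dominates_dirac abs_dirac_nonneg)
  finally show ?thesis
    unfolding hodge_def abs_hodge_def Let_def dirac_def[symmetric] abs_dirac_def[symmetric] mat_mult_def .
qed

lemma abs_hodge_mat_vec: "mat_vec X (abs_hodge X) v x = mat_vec X abs_dirac (mat_vec X abs_dirac v) x"
  unfolding abs_hodge_def Let_def abs_dirac_def[symmetric] by (rule mat_vec_mat_mult)

lemma conn_mat_vec_eq:
  assumes "{} \<notin> X" "x \<in> X" "finite X"
  shows "mat_vec X conn_mat v x = v x + mat_vec X conn_adj_mat v x"
proof -
  have "mat_vec X conn_mat v x = (\<Sum>y\<in>X. (if x = y then v y else 0) + conn_adj_mat x y * v y)"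
    unfolding mat_vec_def using assms by (intro sum.cong) (auto simp: conn_mat_def conn_adj_mat_def conn_adj_def)
  also have "\<dots> = v x + mat_vec X conn_adj_mat v x"
    using assms by (simp add: sum.distrib mat_vec_def)
  finally show ?thesis .
qed

lemma conn_mat_eigenvalue_le:
  assumes fin: "finite X" and ne: "X \<noteq> {}" and nonempty: "{} \<notin> X"
    and eig: "\<forall>x\<in>X. mat_vec X conn_mat y x = r * y x" and nz: "x0 \<in> X" "y x0 \<noteq> 0"
  shows "r \<le> 1 + rayleigh_max X conn_adj_mat"
proof -
  have "r * inner_on X y y = inner_on X y (mat_vec X conn_mat y)"
    using eig by (simp add: inner_on_def sum_distrib_left algebra_simps)
  also have "\<dots> = inner_on X y y + inner_on X y (mat_vec X conn_adj_mat y)"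
    using conn_mat_vec_eq[OF nonempty _ fin] by (simp add: inner_on_def algebra_simps sum.distrib)
  also have "\<dots> \<le> (1 + rayleigh_max X conn_adj_mat) * inner_on X y y"
    using quadratic_form_le_rayleigh_max[OF fin ne, of y conn_adj_mat] by (simp add: algebra_simps)
  finally show ?thesis using inner_on_self_pos[OF fin nz(1), of y] nz(2) by simp
qed

lemma simplices_nonempty: "V \<noteq> {} \<Longrightarrow> simplices V E \<noteq> {}"
  unfolding simplices_def by auto

lemma incident_sum_cong: "(\<And>e. e \<in> E \<Longrightarrow> u e = u' e) \<Longrightarrow> incident_sum E u a = incident_sum E u' a"
  unfolding incident_sum_def by (rule sum.cong) auto

lemma incident_sum_add: "incident_sum E (\<lambda>x. u x + w x) a = incident_sum E u a + incident_sum E w a"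
  unfolding incident_sum_def by (simp add: sum.distrib[symmetric]) (rule sum.cong, auto)

lemma incident_sum_diff: "incident_sum E (\<lambda>x. u x - w x) a = incident_sum E u a - incident_sum E w a"
  unfolding incident_sum_def by (simp add: sum_subtractf[symmetric]) (rule sum.cong, auto)

lemma minus_inverse_mono: "0 < x \<Longrightarrow> x \<le> y \<Longrightarrow> x - 1 / x \<le> y - 1 / (y::real)"
  by (simp add: frac_le diff_mono)

context
  fixes V :: "'a set" and E :: "'a set set"
  assumes graph: "simple_graph V E"
begin

lemma finite_vertices: "finite V"
  using graph by (simp add: simple_graph_def)

lemma edgeD: "e \<in> E \<Longrightarrow> e \<subseteq> V \<and> card e = 2 \<and> finite e"
  using graph unfolding simple_graph_def by (metis card.infinite zero_neq_numeral)

lemma finite_edges: "finite E"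
  using finite_vertices edgeD by (meson Pow_iff finite_Pow_iff rev_finite_subset subsetI)

lemma finite_simplices: "finite (simplices V E)"
  using finite_vertices finite_edges unfolding simplices_def by auto

lemma singleton_notin_edges: "{a} \<notin> E"
  using edgeD by fastforce

lemma empty_notin_simplices: "{} \<notin> simplices V E"
  using edgeD unfolding simplices_def by fastforce

lemma sum_simplices: "(\<Sum>x\<in>simplices V E. g x) = (\<Sum>a\<in>V. g {a}) + (\<Sum>e\<in>E. g e)"
proof -
  have "simplices V E = (\<lambda>a. {a}) ` V \<union> E" unfolding simplices_def by auto
  moreover have "(\<lambda>a. {a}) ` V \<inter> E = {}" using singleton_notin_edges by auto
  ultimately have "(\<Sum>x\<in>simplices V E. g x) = (\<Sum>x\<in>(\<lambda>a. {a}) ` V. g x) + (\<Sum>e\<in>E. g e)"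
    using finite_vertices finite_edges by (simp add: sum.union_disjoint)
  also have "(\<Sum>x\<in>(\<lambda>a. {a}) ` V. g x) = (\<Sum>a\<in>V. g {a})"
    by (subst sum.reindex) (auto simp: inj_on_def)
  finally show ?thesis .
qed

lemma abs_dirac_vertex_vertex: "abs_dirac {a} {b} = 0"
  by (simp add: abs_dirac_def mat_add_def mat_transpose_def abs_d_def)

lemma abs_dirac_vertex_edge: "e \<in> E \<Longrightarrow> abs_dirac {a} e = (if a \<in> e then 1 else 0)"
  using edgeD[of e] by (auto simp: abs_dirac_def mat_add_def mat_transpose_def abs_d_def)

lemma abs_dirac_edge_vertex: "e \<in> E \<Longrightarrow> abs_dirac e {a} = (if a \<in> e then 1 else 0)"
  using edgeD[of e] by (auto simp: abs_dirac_def mat_add_def mat_transpose_def abs_d_def)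

lemma abs_dirac_edge_edge: "e \<in> E \<Longrightarrow> f \<in> E \<Longrightarrow> abs_dirac e f = 0"
  using edgeD[of e] edgeD[of f] by (auto simp: abs_dirac_def mat_add_def mat_transpose_def abs_d_def)

lemma abs_dirac_mat_vec_vertex: "mat_vec (simplices V E) abs_dirac v {a} = incident_sum E v a"
  by (auto simp: mat_vec_def sum_simplices incident_sum_def abs_dirac_vertex_vertex abs_dirac_vertex_edge
      intro!: sum.cong)

lemma abs_dirac_mat_vec_edge:
  assumes e: "e \<in> E"
  shows "mat_vec (simplices V E) abs_dirac v e = endpoint_sum v e"
proof -
  have "mat_vec (simplices V E) abs_dirac v e = (\<Sum>b\<in>V. if b \<in> e then v {b} else 0)"
    by (auto simp: mat_vec_def sum_simplices abs_dirac_edge_vertex[OF e] abs_dirac_edge_edge[OF e]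
        intro!: sum.cong)
  also have "\<dots> = endpoint_sum v e"
    using finite_vertices edgeD[OF e] sum.inter_restrict[of V "\<lambda>b. v {b}" e]
    by (simp add: endpoint_sum_def Int_absorb1)
  finally show ?thesis .
qed

lemma abs_hodge_mat_vec_vertex:
  "mat_vec (simplices V E) (abs_hodge (simplices V E)) v {a} = incident_sum E (endpoint_sum v) a"
  unfolding abs_hodge_mat_vec abs_dirac_mat_vec_vertex incident_sum_def
  by (intro sum.cong) (auto simp: abs_dirac_mat_vec_edge)

lemma abs_hodge_mat_vec_edge:
  "e \<in> E \<Longrightarrow> mat_vec (simplices V E) (abs_hodge (simplices V E)) v e = (\<Sum>b\<in>e. incident_sum E v b)"
  by (simp add: abs_hodge_mat_vec abs_dirac_mat_vec_edge endpoint_sum_def abs_dirac_mat_vec_vertex)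

text \<open>Two distinct edges share at most one vertex, and an edge meets itself in two.\<close>
lemma card_inter_edges:
  assumes e: "e \<in> E" and f: "f \<in> E"
  shows "real (card (e \<inter> f)) = conn_mat e f + (if e = f then 1 else 0)"
proof (cases "e = f")
  case True
  thus ?thesis using edgeD[OF e] by (auto simp: conn_mat_def)
next
  case False
  have fin: "finite e" "card e = 2" "finite f" "card f = 2" using edgeD e f by auto
  have "card (e \<inter> f) \<noteq> 2"
  proof
    assume "card (e \<inter> f) = 2"
    hence "e \<inter> f = e" "e \<inter> f = f" using fin card_subset_eq by (metis inf_le1 inf_le2)+
    thus False using False by simp
  qed
  moreover have "card (e \<inter> f) \<le> 2" using card_mono[OF fin(1), of "e \<inter> f"] fin by auto
  moreover have "e \<inter> f \<noteq> {} \<Longrightarrow> card (e \<inter> f) \<ge> 1" using fin by (simp add: Suc_leI card_gt_0_iff)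
  ultimately show ?thesis using False by (cases "e \<inter> f = {}") (auto simp: conn_mat_def)
qed

lemma conn_mat_vec_vertex:
  assumes a: "a \<in> V"
  shows "mat_vec (simplices V E) conn_mat v {a} = v {a} + incident_sum E v a"
proof -
  have "(\<Sum>b\<in>V. conn_mat {a} {b} * v {b}) = (\<Sum>b\<in>V. if a = b then v {b} else 0)"
    by (rule sum.cong) (auto simp: conn_mat_def)
  moreover have "(\<Sum>e\<in>E. conn_mat {a} e * v e) = incident_sum E v a"
    unfolding incident_sum_def by (rule sum.cong) (auto simp: conn_mat_def)
  ultimately show ?thesis using a finite_vertices by (simp add: mat_vec_def sum_simplices)
qed

lemma conn_mat_vec_edge:
  assumes e: "e \<in> E"
  shows "mat_vec (simplices V E) conn_mat v e = endpoint_sum v e + (\<Sum>b\<in>e. incident_sum E v b) - v e"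
proof -
  have "(\<Sum>b\<in>V. conn_mat e {b} * v {b}) = (\<Sum>b\<in>V. if b \<in> e then v {b} else 0)"
    by (rule sum.cong) (auto simp: conn_mat_def)
  also have "\<dots> = endpoint_sum v e"
    using finite_vertices edgeD[OF e] sum.inter_restrict[of V "\<lambda>b. v {b}" e]
    by (simp add: endpoint_sum_def Int_absorb1)
  finally have vertices: "(\<Sum>b\<in>V. conn_mat e {b} * v {b}) = endpoint_sum v e" .
  have "(\<Sum>b\<in>e. incident_sum E v b) = (\<Sum>f\<in>E. \<Sum>b\<in>e. if b \<in> f then v f else 0)"
    unfolding incident_sum_def by (rule sum.swap)
  also have "\<dots> = (\<Sum>f\<in>E. real (card (e \<inter> f)) * v f)"
    using edgeD[OF e] by (intro sum.cong refl) (simp add: sum.inter_restrict[symmetric] Int_commute)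
  also have "\<dots> = (\<Sum>f\<in>E. conn_mat e f * v f + (if e = f then v f else 0))"
    by (intro sum.cong refl) (simp add: card_inter_edges[OF e] algebra_simps)
  also have "\<dots> = (\<Sum>f\<in>E. conn_mat e f * v f) + v e"
    using finite_edges e by (simp add: sum.distrib)
  finally have edges: "(\<Sum>f\<in>E. conn_mat e f * v f) = (\<Sum>b\<in>e. incident_sum E v b) - v e" by simp
  show ?thesis using vertices edges by (simp add: mat_vec_def sum_simplices)
qed

lemma simplex_cases: "x \<in> simplices V E \<Longrightarrow> (\<And>a. a \<in> V \<Longrightarrow> x = {a} \<Longrightarrow> P) \<Longrightarrow> (x \<in> E \<Longrightarrow> P) \<Longrightarrow> P"
  unfolding simplices_def by auto

lemma endpoint_sum_conn_mat_vec:
  assumes e: "e \<in> E"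
  shows "endpoint_sum (mat_vec (simplices V E) conn_mat v) e = endpoint_sum v e + (\<Sum>b\<in>e. incident_sum E v b)"
proof -
  have "endpoint_sum (mat_vec (simplices V E) conn_mat v) e = (\<Sum>b\<in>e. v {b} + incident_sum E v b)"
    unfolding endpoint_sum_def using edgeD[OF e]
    by (intro sum.cong) (auto simp: conn_mat_vec_vertex)
  thus ?thesis by (simp add: sum.distrib endpoint_sum_def)
qed

lemma incident_sum_conn_mat_vec:
  "incident_sum E (mat_vec (simplices V E) conn_mat v) a =
     incident_sum E (endpoint_sum v) a + incident_sum E (\<lambda>e. \<Sum>b\<in>e. incident_sum E v b) a - incident_sum E v a"
proof -
  have "incident_sum E (mat_vec (simplices V E) conn_mat v) a =
          incident_sum E (\<lambda>e. (endpoint_sum v e + (\<Sum>b\<in>e. incident_sum E v b)) - v e) a"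
    by (intro incident_sum_cong) (simp add: conn_mat_vec_edge)
  thus ?thesis by (simp only: incident_sum_diff incident_sum_add)
qed

lemma conn_mat_square:
  assumes x: "x \<in> simplices V E"
  shows "mat_vec (simplices V E) conn_mat (mat_vec (simplices V E) conn_mat v) x =
           v x + mat_vec (simplices V E) (abs_hodge (simplices V E)) (mat_vec (simplices V E) conn_mat v) x"
  using x
proof (rule simplex_cases)
  fix a assume a: "a \<in> V" and "x = {a}"
  have "incident_sum E (endpoint_sum (mat_vec (simplices V E) conn_mat v)) a =
          incident_sum E (\<lambda>e. endpoint_sum v e + (\<Sum>b\<in>e. incident_sum E v b)) a"
    by (intro incident_sum_cong) (simp add: endpoint_sum_conn_mat_vec)
  with a \<open>x = {a}\<close> show ?thesis
    by (simp add: conn_mat_vec_vertex abs_hodge_mat_vec_vertex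
        incident_sum_conn_mat_vec incident_sum_add)
next
  assume "x \<in> E"
  thus ?thesis
    by (simp add: conn_mat_vec_edge abs_hodge_mat_vec_edge endpoint_sum_conn_mat_vec)
qed

lemma conn_mat_commute_abs_hodge:
  assumes x: "x \<in> simplices V E"
  shows "mat_vec (simplices V E) conn_mat (mat_vec (simplices V E) (abs_hodge (simplices V E)) v) x =
           mat_vec (simplices V E) (abs_hodge (simplices V E)) (mat_vec (simplices V E) conn_mat v) x"
  using x
proof (rule simplex_cases)
  fix a assume a: "a \<in> V" and "x = {a}"
  have "incident_sum E (mat_vec (simplices V E) (abs_hodge (simplices V E)) v) a =
          incident_sum E (\<lambda>e. \<Sum>b\<in>e. incident_sum E v b) a"
    by (intro incident_sum_cong) (simp add: abs_hodge_mat_vec_edge)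
  moreover have "incident_sum E (endpoint_sum (mat_vec (simplices V E) conn_mat v)) a =
          incident_sum E (\<lambda>e. endpoint_sum v e + (\<Sum>b\<in>e. incident_sum E v b)) a"
    by (intro incident_sum_cong) (simp add: endpoint_sum_conn_mat_vec)
  ultimately show ?thesis using a \<open>x = {a}\<close>
    by (simp add: conn_mat_vec_vertex abs_hodge_mat_vec_vertex incident_sum_add)
next
  assume e: "x \<in> E"
  have "(\<Sum>b\<in>x. incident_sum E (mat_vec (simplices V E) (abs_hodge (simplices V E)) v) b) =
          (\<Sum>b\<in>x. incident_sum E (\<lambda>e. \<Sum>b\<in>e. incident_sum E v b) b)"
    by (intro sum.cong refl incident_sum_cong) (simp add: abs_hodge_mat_vec_edge)
  with e show ?thesis
    by (simp add: conn_mat_vec_edge abs_hodge_mat_vec_edge endpoint_sum_def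
        abs_hodge_mat_vec_vertex incident_sum_conn_mat_vec sum.distrib sum_subtractf)
qed

lemma abs_hodge_eigen_if_conn_mat_eigen:
  assumes c: "c > 0" and eig: "\<forall>x\<in>simplices V E. mat_vec (simplices V E) conn_mat u x = c * u x"
    and x: "x \<in> simplices V E"
  shows "mat_vec (simplices V E) (abs_hodge (simplices V E)) u x = (c - 1/c) * u x"
proof -
  have "mat_vec (simplices V E) conn_mat (mat_vec (simplices V E) conn_mat u) x = c * c * u x"
    using eig x by (simp add: mat_vec_cong[of _ _ "\<lambda>x. c * u x"] mat_vec_scale)
  moreover have "mat_vec (simplices V E) (abs_hodge (simplices V E)) (mat_vec (simplices V E) conn_mat u) x
      = c * mat_vec (simplices V E) (abs_hodge (simplices V E)) u x"
    using eig by (simp add: mat_vec_cong[of _ _ "\<lambda>x. c * u x"] mat_vec_scale)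
  ultimately show ?thesis using conn_mat_square[OF x, of u] c by (simp add: field_simps)
qed

lemma conn_mat_eigen_if_abs_hodge_eigen:
  assumes r: "r > 0" "r * r = \<mu> * r + 1"
    and eig: "\<forall>x\<in>simplices V E. mat_vec (simplices V E) (abs_hodge (simplices V E)) u x = \<mu> * u x"
    and x: "x \<in> simplices V E"
  defines "y \<equiv> \<lambda>x. mat_vec (simplices V E) conn_mat u x + (1/r) * u x"
  shows "mat_vec (simplices V E) conn_mat y x = r * y x"
proof -
  have "mat_vec (simplices V E) conn_mat (mat_vec (simplices V E) (abs_hodge (simplices V E)) u) x
      = \<mu> * mat_vec (simplices V E) conn_mat u x"
    using eig by (simp add: mat_vec_cong[of _ _ "\<lambda>x. \<mu> * u x"] mat_vec_scale)
  hence "mat_vec (simplices V E) conn_mat y x = u x + (\<mu> + 1/r) * mat_vec (simplices V E) conn_mat u x"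
    unfolding y_def mat_vec_add mat_vec_scale
    using conn_mat_square[OF x] conn_mat_commute_abs_hodge[OF x] by (simp add: algebra_simps)
  moreover have "\<mu> + 1/r = r" using r by (simp add: field_simps)
  ultimately show ?thesis using r unfolding y_def by (simp add: algebra_simps)
qed


lemma rayleigh_max_abs_hodge_ge:
  assumes ne: "V \<noteq> {}"
  defines "C \<equiv> 1 + rayleigh_max (simplices V E) conn_adj_mat"
  shows "C - 1/C \<le> rayleigh_max (simplices V E) (abs_hodge (simplices V E))"
proof -
  let ?X = "simplices V E"
  have fin: "finite ?X" and neX: "?X \<noteq> {}"
    using finite_simplices simplices_nonempty[OF ne] .
  have C: "C \<ge> 1" using rayleigh_max_nonneg[OF fin neX nonneg_on_conn_adj_mat] unfolding C_def by simp
  obtain u where u: "inner_on ?X u u = 1"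
    "\<forall>x\<in>?X. mat_vec ?X conn_adj_mat u x = rayleigh_max ?X conn_adj_mat * u x"
    using rayleigh_max_eigenvector[OF fin neX symmetric_on_conn_adj_mat] by blast
  have "\<forall>x\<in>?X. mat_vec ?X conn_mat u x = C * u x"
    using u(2) conn_mat_vec_eq[OF empty_notin_simplices _ fin] unfolding C_def by (simp add: algebra_simps)
  hence "inner_on ?X u (mat_vec ?X (abs_hodge ?X) u) = inner_on ?X u (\<lambda>x. (C - 1/C) * u x)"
    using abs_hodge_eigen_if_conn_mat_eigen C by (intro inner_on_cong) auto
  thus ?thesis using quadratic_form_le_rayleigh_max[OF fin neX, of u "abs_hodge ?X"] u(1)
    by (simp add: inner_on_scale_right)
qed

lemma rayleigh_max_abs_hodge_le:
  assumes ne: "V \<noteq> {}"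
  defines "C \<equiv> 1 + rayleigh_max (simplices V E) conn_adj_mat"
  shows "rayleigh_max (simplices V E) (abs_hodge (simplices V E)) \<le> C - 1/C"
proof -
  let ?X = "simplices V E"
  define \<mu> where "\<mu> = rayleigh_max ?X (abs_hodge ?X)"
  have fin: "finite ?X" and neX: "?X \<noteq> {}" and nonempty: "{} \<notin> ?X"
    using finite_simplices simplices_nonempty[OF ne] empty_notin_simplices .
  obtain u where u: "inner_on ?X u u = 1" "\<forall>x. u x \<ge> 0" "\<forall>x\<in>?X. mat_vec ?X (abs_hodge ?X) u x = \<mu> * u x"
    using nonneg_rayleigh_max_eigenvector[OF fin neX symmetric_on_abs_hodge nonneg_on_abs_hodge]
    unfolding \<mu>_def by blast
  have \<mu>: "\<mu> \<ge> 0" using rayleigh_max_nonneg[OF fin neX nonneg_on_abs_hodge] unfolding \<mu>_def .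
  define r where "r = (\<mu> + sqrt (\<mu>\<^sup>2 + 4)) / 2"
  have r_pos: "r > 0" unfolding r_def using \<mu> by (simp add: add_nonneg_pos)
  have "sqrt (\<mu>\<^sup>2 + 4) ^ 2 = \<mu>\<^sup>2 + 4" by simp
  hence "r * r = \<mu> * r + 1" unfolding r_def by (simp add: field_simps power2_eq_square)
  note r = r_pos this
  define y where "y = (\<lambda>x. mat_vec ?X conn_mat u x + (1/r) * u x)"
  have "inner_on ?X u (mat_vec ?X conn_mat u) = inner_on ?X u (\<lambda>x. u x + mat_vec ?X conn_adj_mat u x)"
    using conn_mat_vec_eq[OF nonempty _ fin] by (intro inner_on_cong) auto
  hence "inner_on ?X u y = 1 + inner_on ?X u (mat_vec ?X conn_adj_mat u) + 1/r"
    unfolding y_def inner_on_add_right inner_on_scale_right using u(1) by simp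
  moreover have "inner_on ?X u (mat_vec ?X conn_adj_mat u) \<ge> 0"
    using u(2) by (simp add: quadratic_form_eq_double_sum sum_nonneg conn_adj_mat_def)
  ultimately have "inner_on ?X u y \<noteq> 0" using r(1) by (smt (verit) divide_pos_pos)
  then obtain x0 where "x0 \<in> ?X" "y x0 \<noteq> 0"
    unfolding inner_on_def by (metis (no_types, lifting) mult_zero_right sum.neutral)
  hence "r \<le> C" unfolding C_def using conn_mat_eigen_if_abs_hodge_eigen[OF r u(3)] y_def
    by (intro conn_mat_eigenvalue_le[OF fin neX nonempty]) auto
  moreover have "\<mu> = r - 1/r" using r by (simp add: field_simps)
  ultimately show ?thesis using minus_inverse_mono r(1) unfolding \<mu>_def by simp
qed

end

lemma spectral_radius_abs_hodge_eq_rayleigh_max: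
  assumes "simple_graph V E" "V \<noteq> {}"
  shows "spectral_radius (simplices V E) (abs_hodge (simplices V E))
           = rayleigh_max (simplices V E) (abs_hodge (simplices V E))"
  by (rule spectral_radius_eq_rayleigh_max[OF finite_simplices[OF assms(1)] simplices_nonempty[OF assms(2)]
        symmetric_on_abs_hodge nonneg_on_abs_hodge])

lemma spectral_radius_hodge_le:
  assumes "simple_graph V E" "V \<noteq> {}"
  shows "spectral_radius (simplices V E) (hodge (simplices V E) head)
           \<le> spectral_radius (simplices V E) (abs_hodge (simplices V E))"
  unfolding spectral_radius_abs_hodge_eq_rayleigh_max[OF assms]
  by (rule spectral_radius_le_rayleigh_max_if_dominated[OF finite_simplices[OF assms(1)]
        simplices_nonempty[OF assms(2)] symmetric_on_hodge]) (simp add: abs_hodge_dominates_hodge)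

theorem mainTheorem4:
  fixes V :: "'a set" and E :: "'a set set" and head :: "'a set \<Rightarrow> 'a"
  assumes "simple_graph V E" and "V \<noteq> {}"
    and "\<forall>e\<in>E. head e \<in> e"
  shows "(\<forall>k\<ge>1. spectral_radius (simplices V E) (hodge (simplices V E) head)
             \<le> r_seq (simplices V E) k - 1 / r_seq (simplices V E) k)
       \<and> (\<lambda>k. r_seq (simplices V E) k - 1 / r_seq (simplices V E) k)
            \<longlonglongrightarrow> spectral_radius (simplices V E) (abs_hodge (simplices V E))"
proof -
  let ?X = "simplices V E"
  define C where "C = 1 + rayleigh_max ?X conn_adj_mat"
  have fin: "finite ?X" using finite_simplices[OF assms(1)] .
  have ne: "?X \<noteq> {}" using simplices_nonempty[OF assms(2)] .
  have C: "C > 0" using rayleigh_max_nonneg[OF fin ne nonneg_on_conn_adj_mat] unfolding C_def by simp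
  have abs_hodge: "spectral_radius ?X (abs_hodge ?X) = C - 1/C"
    using spectral_radius_abs_hodge_eq_rayleigh_max[OF assms(1,2)] rayleigh_max_abs_hodge_ge[OF assms(1,2)]
      rayleigh_max_abs_hodge_le[OF assms(1,2)] unfolding C_def by simp
  hence hodge: "spectral_radius ?X (hodge ?X head) \<le> C - 1/C"
    using spectral_radius_hodge_le[OF assms(1,2)] by simp
  have "C \<le> r_seq ?X k" if "k \<ge> 1" for k
    using rayleigh_max_le_root_max_walks[OF fin ne that] unfolding C_def r_seq_def by simp
  hence "spectral_radius ?X (hodge ?X head) \<le> r_seq ?X k - 1 / r_seq ?X k" if "k \<ge> 1" for k
    using minus_inverse_mono[OF C] hodge that by (meson order_trans)
  moreover have "r_seq ?X \<longlonglongrightarrow> C"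
    unfolding r_seq_def[abs_def] C_def by (intro tendsto_add tendsto_const root_max_walks_tendsto fin ne)
  hence "(\<lambda>k. r_seq ?X k - 1 / r_seq ?X k) \<longlonglongrightarrow> C - 1/C"
    using C by (intro tendsto_diff tendsto_divide tendsto_const) auto
  ultimately show ?thesis using abs_hodge by simp
qed

end
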